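(* For all integers $n,k\ge 0$, the map $\phi'$ defined below restricts to a bijection from the set of bilateral Dyck paths of semilength $n$ with $k$ up-steps at odd height onto the set of bilateral Dyck paths of semilength $n$ with $k$ peaks. Definition of $\phi'$: (a) if $W$ is a Dyck word, $\phi'(W)=\phi(W)$; (b) if $W$ is a negative Dyck word, $\phi'(W)=\alpha(\phi(\beta(\alpha(W))))$; (c) if the path of $W$ has $l>0$ crossings, $W$ decomposes uniquely as $W=W_1W_2\cdots W_{l+1}$ where the $W_i$ are alternately nonempty Dyck words and negative Dyck words, and $\phi'(W)=\phi'(W_1)\phi'(W_2)\cdots\phi'(W_{l+1})$. Here: $\alpha$ replaces every $U$ by $D$ and every $D$ by $U$ (reflection in the $x$-axis). $\beta$ is defined on Dyck words: a nonempty Dyck word decomposes uniquely as $UW_1DW_2$ with $W_1,W_2$ Dyck words, and $\beta(UW_1DW_2)=UW_2DW_1$. $\phi$ is defined on Dyck words by $\phi(\epsilon)=\epsilon$ and, for a nonempty Dyck word $W$ whose path has $s\ge0$ down-steps at height $2$ before its first contact, with unique decomposition $W=U\big(\prod_{i=1}^{s}UW_iD\big)DW_{s+1}$ ($W_i$ Dyck words), $\phi(W)=\big(\prod_{i=1}^{s}U\,\phi(W_i)\big)\,UD\,D^{s}\,\phi(W_{s+1})$.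
   Context: Paths have steps $(1,1)$ (up-step, letter $U$) and $(1,-1)$ (down-step, letter $D$), start at $(0,0)$; paths and words in $\{U,D\}$ are identified, $\epsilon$ is the empty word, products denote concatenation and $D^s$ is $s$ copies of $D$. A bilateral Dyck path is such a path ending on the line $y=0$ (no other restriction). A Dyck path is a bilateral Dyck path with no vertex of negative $y$-coordinate; a negative Dyck path is a bilateral Dyck path of nonzero length with no vertex of positive $y$-coordinate. The semilength is half the number of steps. An up-step is at height $j$ if it goes from $(i-1,j-1)$ to $(i,j)$; a down-step is at height $j$ if it goes from $(i,j)$ to $(i+1,j-1)$; it is at odd height if $j$ is odd. A peak is an up-step immediately followed by a down-step. A contact is a down-step at height $1$ or an up-step at height $0$. A crossing is a down-step at height $1$ immediately followed by a down-step at height $0$, or an up-step at height $0$ immediately followed by an up-step at height $1$. *)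

theory Defs
  imports Main
begin

datatype step = U | D

fun flip :: "step \<Rightarrow> step" where
  "flip U = D" | "flip D = U"

definition alpha :: "step list \<Rightarrow> step list" where
  "alpha w = map flip w"

lemma length_alpha[simp]: "length (alpha w) = length w"
  by (simp add: alpha_def)

fun ht :: "step list \<Rightarrow> int" where
  "ht [] = 0"
| "ht (U # w) = ht w + 1"
| "ht (D # w) = ht w - 1"

definition bilateral :: "step list \<Rightarrow> bool" where
  "bilateral w \<longleftrightarrow> ht w = 0"

definition dyck :: "step list \<Rightarrow> bool" where
  "dyck w \<longleftrightarrow> ht w = 0 \<and> (\<forall>k\<le>length w. 0 \<le> ht (take k w))"

definition neg_dyck :: "step list \<Rightarrow> bool" where
  "neg_dyck w \<longleftrightarrow> w \<noteq> [] \<and> ht w = 0 \<and> (\<forall>k\<le>length w. ht (take k w) \<le> 0)"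

text \<open>Number of up-steps at odd height: the up-step at position i (0-based)
  ends at height ht (take (i+1) w).\<close>
definition odd_ups :: "step list \<Rightarrow> nat" where
  "odd_ups w = card {i. i < length w \<and> w ! i = U \<and> odd (ht (take (Suc i) w))}"

definition peaks :: "step list \<Rightarrow> nat" where
  "peaks w = card {i. Suc i < length w \<and> w ! i = U \<and> w ! Suc i = D}"

text \<open>splitaux d xs: starting at depth d above the base line, scan xs until the
  first step returning to the base line; return (part before that step, part after).\<close>
fun splitaux :: "nat \<Rightarrow> step list \<Rightarrow> step list \<times> step list" where
  "splitaux d [] = ([], [])"
| "splitaux d (U # xs) = (case splitaux (Suc d) xs of (a, b) \<Rightarrow> (U # a, b))"
| "splitaux 0 (D # xs) = ([], xs)"
| "splitaux (Suc 0) (D # xs) = ([], xs)"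
| "splitaux (Suc (Suc d)) (D # xs) = (case splitaux (Suc d) xs of (a, b) \<Rightarrow> (D # a, b))"

lemma splitaux_len:
  "length (fst (splitaux d xs)) + length (snd (splitaux d xs)) \<le> length xs"
  by (induction d xs rule: splitaux.induct) (auto split: prod.splits)

lemma splitaux_len':
  "splitaux d xs = (a, b) \<Longrightarrow> length a + length b \<le> length xs"
  using splitaux_len[of d xs] by simp

lemma splitaux_len'':
  "(a, b) = splitaux d xs \<Longrightarrow> length a + length b \<le> length xs"
  using splitaux_len[of d xs] by (metis fst_conv snd_conv)

text \<open>Decomposition of a bilateral word into its primitive pieces (factors between
  consecutive returns to the x-axis).\<close>
function bprims :: "step list \<Rightarrow> step list list" where
  "bprims [] = []"
| "bprims (U # xs) = (case splitaux 1 xs of (a, b) \<Rightarrow> (U # a @ [D]) # bprims b)"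
| "bprims (D # xs) = (case splitaux 1 (alpha xs) of (a, b) \<Rightarrow> (D # alpha a @ [U]) # bprims (alpha b))"
  by pat_completeness auto
termination
  by (relation "measure length") (fastforce dest!: splitaux_len'')+

lemma bprims_len: "p \<in> set (bprims w) \<Longrightarrow> length p \<le> Suc (length w)"
proof (induction w rule: bprims.induct)
  case 1 then show ?case by simp
next
  case (2 xs)
  obtain a b where ab: "splitaux 1 xs = (a, b)" by fastforce
  from 2 ab splitaux_len'[OF ab] show ?case by (auto dest: 2(1)[OF ab[symmetric]])
next
  case (3 xs)
  obtain a b where ab: "splitaux 1 (alpha xs) = (a, b)" by fastforce
  from 3 ab splitaux_len'[OF ab] show ?case by (auto dest: 3(1)[OF ab[symmetric]])
qed

text \<open>phi on Dyck words: for W = U A D B (first contact after A), the factors U W_i D of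
  A are the primitive pieces of A (their closing steps are the down-steps at height 2
  before the first contact), and
  phi W = (prod_i U phi(W_i)) U D D^s phi(B).\<close>
function phi :: "step list \<Rightarrow> step list" where
  "phi [] = []"
| "phi (x # xs) = (case splitaux 1 xs of (a, b) \<Rightarrow>
      concat (map (\<lambda>p. U # phi (butlast (tl p))) (bprims a))
      @ [U, D] @ replicate (length (bprims a)) D @ phi b)"
  by pat_completeness auto
termination
  by (relation "measure length") (fastforce dest!: splitaux_len'' bprims_len)+

definition beta :: "step list \<Rightarrow> step list" where
  "beta w = (case splitaux 1 (tl w) of (a, b) \<Rightarrow> U # b @ D # a)"

text \<open>Merge consecutive primitive pieces lying on the same side of the x-axis:
  this yields the unique decomposition W = W_1 ... W_(l+1) into maximal alternately
  Dyck / negative Dyck nonempty factors (separated by the crossings).\<close>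
fun runs :: "step list list \<Rightarrow> step list list" where
  "runs [] = []"
| "runs [p] = [p]"
| "runs (p # q # ps) = (if hd p = hd q then runs ((p @ q) # ps) else p # runs (q # ps))"

definition phi_block :: "step list \<Rightarrow> step list" where
  "phi_block B = (if hd B = U then phi B else alpha (phi (beta (alpha B))))"

definition phi' :: "step list \<Rightarrow> step list" where
  "phi' w = concat (map phi_block (runs (bprims w)))"

end

theory Submission
  imports Defs
begin

text \<open>
  A nonempty Dyck word factors as \<open>U A D B\<close> at its first return, with \<open>A = U W\<^sub>1 D \<dots> U W\<^sub>s D\<close>,
  and \<open>\<phi>(U A D B) = U S D \<phi>(B)\<close> where \<open>S = \<phi>(W\<^sub>1) U \<dots> \<phi>(W\<^sub>s) U D\<^sup>s\<close> is again a Dyck word.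
  By induction \<open>\<phi>\<close> preserves length and the Dyck property, and it is injective: \<open>S\<close> and \<open>\<phi>(B)\<close>
  are recovered by the first return, the number \<open>s\<close> by the final run of \<open>D\<close>s of \<open>S\<close>, and the
  \<open>\<phi>(W\<^sub>i)\<close> by cutting \<open>S\<close> at its first visits to the heights \<open>1, \<dots>, s\<close>.  The up-steps at odd
  height of \<open>U A D B\<close> are the first step, those of \<open>B\<close> and those of the \<open>W\<^sub>i\<close> (lifted by two
  levels); they match the peak \<open>U D\<close> closing \<open>S\<close> and the peaks of \<open>\<phi>(B)\<close> and of the \<open>\<phi>(W\<^sub>i)\<close>.

  A negative block \<open>\<alpha>(U A D C)\<close> goes to \<open>\<alpha>(\<phi>(U C D A))\<close>.  Reflection turns peaks into valleys,
  and a word from \<open>U\<close> to \<open>D\<close> has one valley fewer than peaks; this loss is exactly the first step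
  of \<open>U C D A\<close>, while the swap puts \<open>C\<close> one level up, matching the parities in \<open>\<alpha>(U A D C)\<close>.

  The maximal one-signed blocks of a bilateral word alternate in sign and each image block starts
  like its block and ends with the opposite step, so no peak appears at the junctions and the image
  still determines the blocks.  Hence \<open>\<phi>'\<close> is an injective self-map of the finite set of bilateral
  words of length \<open>2n\<close> sending up-steps at odd height to peaks, so it is a bijection on level sets.
\<close>

section \<open>Heights and reflection\<close>

fun rise :: "step \<Rightarrow> int" where
  "rise U = 1"
| "rise D = -1"

lemma ht_Cons: "ht (x # w) = rise x + ht w"
  by (cases x) auto

lemma ht_append [simp]: "ht (a @ b) = ht a + ht b"
  by (induction a) (auto simp: ht_Cons)

lemma ht_replicate_D [simp]: "ht (replicate s D) = - int s"
  by (induction s) auto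

lemma flip_flip [simp]: "flip (flip x) = x"
  by (cases x) auto

lemma flip_eq_iff_neq: "flip x = y \<longleftrightarrow> x \<noteq> y"
  by (cases x; cases y) auto

lemma rise_flip [simp]: "rise (flip x) = - rise x"
  by (cases x) auto

lemma alpha_simps [simp]:
  "alpha [] = []" "alpha (x # w) = flip x # alpha w" "alpha (a @ b) = alpha a @ alpha b"
  by (auto simp: alpha_def)

lemma alpha_alpha [simp]: "alpha (alpha w) = w"
  by (induction w) auto

lemma alpha_inject [simp]: "alpha a = alpha b \<longleftrightarrow> a = b"
  by (metis alpha_alpha)

lemma alpha_eq_Nil_iff [simp]: "alpha w = [] \<longleftrightarrow> w = []"
  by (simp add: alpha_def)

lemma ht_alpha [simp]: "ht (alpha w) = - ht w"
  by (induction w) (auto simp: ht_Cons)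

lemma take_alpha: "take k (alpha w) = alpha (take k w)"
  by (simp add: alpha_def take_map)

lemma hd_alpha: "w \<noteq> [] \<Longrightarrow> hd (alpha w) = flip (hd w)"
  by (cases w) auto

lemma last_alpha: "w \<noteq> [] \<Longrightarrow> last (alpha w) = flip (last w)"
  by (simp add: alpha_def last_map)

fun stays_nonneg :: "int \<Rightarrow> step list \<Rightarrow> bool" where
  "stays_nonneg h [] \<longleftrightarrow> 0 \<le> h"
| "stays_nonneg h (x # w) \<longleftrightarrow> 0 \<le> h \<and> stays_nonneg (h + rise x) w"

lemma stays_nonneg_append [simp]:
  "stays_nonneg h (a @ b) \<longleftrightarrow> stays_nonneg h a \<and> stays_nonneg (h + ht a) b"
proof (induction a arbitrary: h)
  case Nil then show ?case by (cases b) auto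
next
  case (Cons x a) then show ?case by (auto simp: ht_Cons add.assoc)
qed

lemma stays_nonneg_start: "stays_nonneg h w \<Longrightarrow> 0 \<le> h"
  by (cases w) auto

lemma stays_nonneg_end: "stays_nonneg h w \<Longrightarrow> 0 \<le> h + ht w"
  using stays_nonneg_append[of h w "[]"] by simp

lemma stays_nonneg_mono: "stays_nonneg h w \<Longrightarrow> h \<le> h' \<Longrightarrow> stays_nonneg h' w"
  by (induction w arbitrary: h h') fastforce+

lemma stays_nonneg_iff_take:
  "stays_nonneg h w \<longleftrightarrow> (\<forall>k\<le>length w. 0 \<le> h + ht (take k w))"
proof (induction w arbitrary: h)
  case Nil then show ?case by simp
next
  case (Cons x w)
  have "(\<forall>k\<le>length (x # w). 0 \<le> h + ht (take k (x # w))) \<longleftrightarrow>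
        0 \<le> h \<and> (\<forall>k\<le>length w. 0 \<le> h + rise x + ht (take k w))"
    (is "?L \<longleftrightarrow> ?R")
  proof
    assume ?L
    then show ?R
      by (auto simp: ht_Cons add.assoc dest: spec[of _ 0] spec[of _ "Suc _"])
  next
    assume ?R
    show ?L
    proof (intro allI impI)
      fix k assume "k \<le> length (x # w)"
      with \<open>?R\<close> show "0 \<le> h + ht (take k (x # w))"
        by (cases k) (auto simp: ht_Cons add.assoc)
    qed
  qed
  with Cons.IH show ?case by simp
qed

lemma dyck_iff_stays_nonneg: "dyck w \<longleftrightarrow> ht w = 0 \<and> stays_nonneg 0 w"
  by (simp add: dyck_def stays_nonneg_iff_take)

lemma neg_dyck_iff_dyck_alpha: "neg_dyck w \<longleftrightarrow> w \<noteq> [] \<and> dyck (alpha w)"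
  by (auto simp: neg_dyck_def dyck_def take_alpha)

lemma dyck_Nil [simp]: "dyck []"
  by (simp add: dyck_iff_stays_nonneg)

lemma dyck_hd: "dyck w \<Longrightarrow> w \<noteq> [] \<Longrightarrow> hd w = U"
  by (cases w; cases "hd w") (auto simp: dyck_iff_stays_nonneg dest: stays_nonneg_start)

lemma dyck_last: "dyck w \<Longrightarrow> w \<noteq> [] \<Longrightarrow> last w = D"
  by (cases w rule: rev_cases; cases "last w")
    (auto simp: dyck_iff_stays_nonneg dest: stays_nonneg_end)

lemma dyck_append: "dyck a \<Longrightarrow> dyck b \<Longrightarrow> dyck (a @ b)"
  by (simp add: dyck_iff_stays_nonneg)

lemma dyck_append_cancel: "dyck a \<Longrightarrow> dyck (a @ b) \<Longrightarrow> dyck b"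
  by (simp add: dyck_iff_stays_nonneg)

lemma dyck_U_D: "dyck a \<Longrightarrow> dyck b \<Longrightarrow> dyck (U # a @ D # b)"
  by (auto simp: dyck_iff_stays_nonneg ht_Cons elim: stays_nonneg_mono)

lemma first_return:
  assumes "1 \<le> d" "d + ht xs \<le> 0"
  obtains A B where "xs = A @ D # B" "d + ht A = 1" "stays_nonneg (d - 1) A"
  using assms
proof (induction xs arbitrary: d)
  case Nil then show ?case by simp
next
  case (Cons x ys)
  show ?case
  proof (cases "x = D \<and> d = 1")
    case True
    then show ?thesis using Cons.prems(1)[of "[]" ys] by simp
  next
    case False
    then have "1 \<le> d + rise x" "d + rise x + ht ys \<le> 0"
      using Cons.prems(2,3) by (cases x; auto simp: ht_Cons)+
    then show ?thesis
      using Cons.IH[of "d + rise x"] Cons.prems(1)[of "x # _"] Cons.prems(2)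
      by (auto simp: ht_Cons algebra_simps)
  qed
qed

lemma splitaux_first_return:
  "1 \<le> d \<Longrightarrow> int d + ht A = 1 \<Longrightarrow> stays_nonneg (int d - 1) A \<Longrightarrow>
    splitaux d (A @ D # B) = (A, B)"
proof (induction A arbitrary: d)
  case Nil then have "d = Suc 0" by simp
  then show ?case by simp
next
  case (Cons x A)
  show ?case
  proof (cases x)
    case U
    with Cons.prems have "splitaux (Suc d) (A @ D # B) = (A, B)"
      by (intro Cons.IH) (auto simp: algebra_simps)
    then show ?thesis using U by simp
  next
    case D
    with Cons.prems have "2 \<le> d" by (auto dest: stays_nonneg_start)
    then obtain e where e: "d = Suc (Suc e)" by (metis add_2_eq_Suc le_Suc_ex)
    with D Cons.prems have "splitaux (Suc e) (A @ D # B) = (A, B)"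
      by (intro Cons.IH) (auto simp: algebra_simps)
    then show ?thesis using D e by simp
  qed
qed

lemma splitaux_dyck: "dyck A \<Longrightarrow> splitaux 1 (A @ D # B) = (A, B)"
  by (rule splitaux_first_return) (auto simp: dyck_iff_stays_nonneg)

lemma dyck_append_D_inject:
  assumes "dyck S" "dyck S'"
  shows "S @ D # T = S' @ D # T' \<longleftrightarrow> S = S' \<and> T = T'"
proof
  assume "S @ D # T = S' @ D # T'"
  then have "splitaux 1 (S @ D # T) = splitaux 1 (S' @ D # T')" by simp
  then show "S = S' \<and> T = T'"
    using splitaux_dyck[OF assms(1), of T] splitaux_dyck[OF assms(2), of T'] by simp
qed simp

lemma dyck_first_return:
  assumes "dyck (U # xs)"
  obtains A B where "xs = A @ D # B" "dyck A" "dyck B"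
proof -
  from assms have "1 + ht xs \<le> 0" by (simp add: dyck_iff_stays_nonneg)
  then obtain A B where "xs = A @ D # B" "1 + ht A = 1" "stays_nonneg 0 A"
    using first_return[of 1 xs] by auto
  with assms that show ?thesis by (auto simp: dyck_iff_stays_nonneg ht_Cons)
qed

lemma dyck_cases [consumes 1, case_names Nil U_D]:
  assumes "dyck W"
  obtains "W = []" | A B where "W = U # A @ D # B" "dyck A" "dyck B"
proof (cases W)
  case (Cons x xs)
  with assms dyck_hd have "dyck (U # xs)" "W = U # xs" by fastforce+
  then show ?thesis using that(2) by (auto elim: dyck_first_return)
qed (use that(1) in simp)

lemma dyck_prefix_unique:
  assumes "X @ Y = X' @ Y'" "dyck X" "dyck X'"
    and "\<And>Z T. Y = Z @ T \<Longrightarrow> dyck Z \<Longrightarrow> Z = []"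
    and "\<And>Z T. Y' = Z @ T \<Longrightarrow> dyck Z \<Longrightarrow> Z = []"
  shows "X = X'"
proof -
  from assms(1) obtain Z where "X = X' @ Z \<and> Z @ Y = Y' \<or> X @ Z = X' \<and> Y = Z @ Y'"
    by (auto simp: append_eq_append_conv2)
  then show ?thesis
    using assms(2-5) dyck_append_cancel[of X' Z] dyck_append_cancel[of X Z] by force
qed

lemma no_dyck_prefix_D: "Y = [] \<or> hd Y = D \<Longrightarrow> Y = Z @ T \<Longrightarrow> dyck Z \<Longrightarrow> Z = []"
  by (cases Z) (auto dest: dyck_hd)

lemma no_dyck_prefix_rise:
  assumes "stays_nonneg 0 R" "U # R = Z @ T" "dyck Z"
  shows "Z = []"
proof (rule ccontr)
  assume "Z \<noteq> []"
  with assms(2) obtain Z0 where "Z = U # Z0" "R = Z0 @ T" by (cases Z) auto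
  with assms show False by (auto simp: dyck_iff_stays_nonneg dest: stays_nonneg_end)
qed

section \<open>Up-steps at odd height and peaks\<close>

fun odd_ups_from :: "int \<Rightarrow> step list \<Rightarrow> nat" where
  "odd_ups_from h [] = 0"
| "odd_ups_from h (x # w) = (if x = U \<and> odd (h + 1) then 1 else 0) + odd_ups_from (h + rise x) w"

text \<open>A down-step is counted when it \<^emph>\<open>ends\<close> at odd height (its height in the paper's sense is
  then even), so that this is the mirror image of \<open>odd_ups_from\<close> under \<open>alpha\<close>.\<close>
fun odd_downs_from :: "int \<Rightarrow> step list \<Rightarrow> nat" where
  "odd_downs_from h [] = 0"
| "odd_downs_from h (x # w) = (if x = D \<and> odd (h - 1) then 1 else 0) + odd_downs_from (h + rise x) w"

fun peak_count :: "step list \<Rightarrow> nat" where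
  "peak_count [] = 0"
| "peak_count (x # w) = (if w \<noteq> [] \<and> x = U \<and> hd w = D then 1 else 0) + peak_count w"

lemma card_Suc_split:
  assumes "finite {i. Q (Suc i)}"
  shows "card {i. Q i} = (if Q 0 then 1 else 0) + card {i. Q (Suc i)}"
proof -
  have "{i. Q i} = (if Q 0 then {0} else {}) \<union> Suc ` {i. Q (Suc i)}"
  proof (intro set_eqI iffI)
    fix i assume "i \<in> {i. Q i}"
    then show "i \<in> (if Q 0 then {0} else {}) \<union> Suc ` {i. Q (Suc i)}"
      by (cases i) auto
  qed (auto split: if_splits)
  moreover have "card ((if Q 0 then {0} else {}) \<union> Suc ` {i. Q (Suc i)}) =
      card (if Q 0 then {0::nat} else {}) + card (Suc ` {i. Q (Suc i)})"
    by (rule card_Un_disjoint) (use assms in auto)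
  ultimately show ?thesis by (simp add: card_image)
qed

lemma card_odd_ups_from:
  "card {i. i < length w \<and> w ! i = U \<and> odd (h + ht (take (Suc i) w))} = odd_ups_from h w"
proof (induction w arbitrary: h)
  case Nil then show ?case by simp
next
  case (Cons x w)
  have fin: "finite {i. Suc i < length (x # w) \<and> (x # w) ! Suc i = U \<and>
      odd (h + ht (take (Suc (Suc i)) (x # w)))}"
    by (rule finite_subset[of _ "{..<length (x # w)}"]) auto
  have "card {i. i < length (x # w) \<and> (x # w) ! i = U \<and> odd (h + ht (take (Suc i) (x # w)))}
     = (if x = U \<and> odd (h + 1) then 1 else 0) +
       card {i. i < length w \<and> w ! i = U \<and> odd (h + rise x + ht (take (Suc i) w))}"
    by (subst card_Suc_split[OF fin]) (cases x; auto simp: ht_Cons add.assoc)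
  then show ?case by (simp only: Cons.IH odd_ups_from.simps)
qed

lemma odd_ups_eq: "odd_ups w = odd_ups_from 0 w"
  using card_odd_ups_from[of w 0] by (simp add: odd_ups_def)

lemma peaks_eq: "peaks w = peak_count w"
proof (induction w)
  case Nil then show ?case by (simp add: peaks_def)
next
  case (Cons x w)
  have "finite {i. Suc (Suc i) < length (x # w) \<and> (x # w) ! Suc i = U \<and> (x # w) ! Suc (Suc i) = D}"
    by (rule finite_subset[of _ "{..<length (x # w)}"]) auto
  then have "peaks (x # w) = (if Suc 0 < length (x # w) \<and> x = U \<and> (x # w) ! Suc 0 = D then 1 else 0)
      + peaks w"
    unfolding peaks_def by (subst card_Suc_split) auto
  with Cons.IH show ?case by (cases w) auto
qed

lemma odd_ups_from_append:
  "odd_ups_from h (a @ b) = odd_ups_from h a + odd_ups_from (h + ht a) b"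
  by (induction a arbitrary: h) (auto simp: ht_Cons add.assoc)

lemma odd_downs_from_append:
  "odd_downs_from h (a @ b) = odd_downs_from h a + odd_downs_from (h + ht a) b"
  by (induction a arbitrary: h) (auto simp: ht_Cons add.assoc)

lemma odd_ups_from_parity: "even (h - h') \<Longrightarrow> odd_ups_from h w = odd_ups_from h' w"
proof (induction w arbitrary: h h')
  case (Cons x w)
  have "even (h + rise x - (h' + rise x))" using Cons.prems by simp
  with Cons show ?case by auto
qed simp

lemma odd_ups_from_alpha: "odd_ups_from h (alpha w) = odd_downs_from (- h) w"
  by (induction w arbitrary: h) (auto elim: flip.elims)

lemma odd_ups_from_eq_odd_downs_from:
  assumes "ht w = 0"
  shows "odd_ups_from (h + 1) w = odd_downs_from h w"
proof -
  have "int (odd_ups_from (h + 1) w) - int (odd_downs_from h w) = (h + ht w) div 2 - h div 2" for h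
  proof (induction w arbitrary: h)
    case (Cons x w)
    from Cons.IH[of "h + rise x"] show ?case by (cases x) (auto simp: algebra_simps, presburger+)
  qed simp
  with assms show ?thesis by simp
qed

lemma peak_count_append:
  "peak_count (a @ b) = peak_count a + peak_count b +
    (if a \<noteq> [] \<and> b \<noteq> [] \<and> last a = U \<and> hd b = D then 1 else 0)"
  by (induction a) auto

lemma peak_count_replicate_D [simp]: "peak_count (replicate s D) = 0"
  by (induction s) auto

lemma peak_count_alpha:
  "w \<noteq> [] \<Longrightarrow> int (peak_count w) - int (peak_count (alpha w)) =
    (if hd w = U then 1 else 0) - (if last w = U then 1 else 0)"
proof (induction w)
  case (Cons x w)
  then show ?case by (cases "w = []"; cases x; cases "hd w") (auto simp: hd_alpha)
qed simp

section \<open>Arch decomposition and the map \<open>\<phi>\<close>\<close>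

lemma bprims_factors:
  "ht w = 0 \<Longrightarrow> concat (bprims w) = w \<and>
    (\<forall>p\<in>set (bprims w). \<exists>I. dyck I \<and>
       (p = U # I @ [D] \<or> \<not> stays_nonneg 0 w \<and> p = D # alpha I @ [U]))"
proof (induction w rule: bprims.induct)
  case 1 then show ?case by simp
next
  case (2 xs)
  then have "1 + ht xs \<le> 0" by simp
  then obtain A B where AB: "xs = A @ D # B" "1 + ht A = 1" "stays_nonneg 0 A"
    using first_return[of 1 xs] by auto
  then have "splitaux 1 xs = (A, B)" "dyck A" "ht B = 0"
    using "2.prems" by (auto simp: splitaux_first_return dyck_iff_stays_nonneg)
  with "2.IH" AB show ?case by auto
next
  case (3 xs)
  then have "1 + ht (alpha xs) \<le> 0" by simp
  then obtain A B where AB: "alpha xs = A @ D # B" "1 + ht A = 1" "stays_nonneg 0 A"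
    using first_return[of 1 "alpha xs"] by auto
  then have sp: "splitaux 1 (alpha xs) = (A, B)" and "dyck A"
    and xs: "xs = alpha A @ U # alpha B"
    by (auto simp: splitaux_first_return dyck_iff_stays_nonneg dest: arg_cong[of _ _ alpha])
  moreover have "ht (alpha B) = 0" using "3.prems" xs AB(2) by simp
  moreover have "\<not> stays_nonneg 0 (D # xs)"
    using stays_nonneg_start[of "-1" xs] by auto
  ultimately show ?case using "3.IH"[OF sp[symmetric]] by auto
qed

lemma concat_bprims: "ht w = 0 \<Longrightarrow> concat (bprims w) = w"
  using bprims_factors by blast

definition arch_interiors :: "step list \<Rightarrow> step list list" where
  "arch_interiors A = map (butlast \<circ> tl) (bprims A)"

lemma bprims_dyck: "dyck A \<Longrightarrow> bprims A = map (\<lambda>I. U # I @ [D]) (arch_interiors A)"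
  using bprims_factors[of A]
  by (auto simp: arch_interiors_def dyck_iff_stays_nonneg intro!: map_idI[symmetric])

lemma concat_arch_interiors: "dyck A \<Longrightarrow> concat (map (\<lambda>I. U # I @ [D]) (arch_interiors A)) = A"
  using concat_bprims[of A] bprims_dyck[of A] by (simp add: dyck_iff_stays_nonneg)

lemma dyck_arch_interiors: "dyck A \<Longrightarrow> I \<in> set (arch_interiors A) \<Longrightarrow> dyck I"
  using bprims_factors[of A] by (auto simp: arch_interiors_def dyck_iff_stays_nonneg)

lemma length_arch_interior: "dyck A \<Longrightarrow> I \<in> set (arch_interiors A) \<Longrightarrow> length I < length A"
  using concat_arch_interiors[of A] by (force dest: split_list)

lemma dyck_induct [consumes 1, case_names Nil U_D]:
  assumes "dyck W" and "P []"
    and "\<And>A B. dyck A \<Longrightarrow> dyck B \<Longrightarrow> (\<And>I. I \<in> set (arch_interiors A) \<Longrightarrow> P I) \<Longrightarrow> P B \<Longrightarrow>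
      P (U # A @ D # B)"
  shows "P W"
  using assms(1)
proof (induction W rule: length_induct)
  case (1 W)
  from 1(2) show ?case
  proof (cases rule: dyck_cases)
    case (U_D A B)
    with 1(1) have "P I" if "I \<in> set (arch_interiors A)" for I
      using that length_arch_interior dyck_arch_interiors by fastforce
    with 1(1) U_D show ?thesis by (auto intro: assms(3))
  qed (use assms(2) in simp)
qed

definition ascent :: "step list list \<Rightarrow> step list" where
  "ascent Xs = concat (map (\<lambda>X. X @ [U]) Xs)"

definition staircase :: "step list list \<Rightarrow> step list" where
  "staircase Xs = ascent Xs @ replicate (length Xs) D"

lemma ascent_simps [simp]: "ascent [] = []" "ascent (X # Xs) = X @ U # ascent Xs"
  by (simp_all add: ascent_def)

lemma ascent_Nil_or_last: "ascent Xs = [] \<or> last (ascent Xs) = U"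
  by (induction Xs) auto

lemma stays_nonneg_ascent:
  "(\<And>X. X \<in> set Xs \<Longrightarrow> dyck X) \<Longrightarrow> stays_nonneg 0 (ascent Xs) \<and> ht (ascent Xs) = int (length Xs)"
  by (induction Xs) (auto simp: dyck_iff_stays_nonneg elim: stays_nonneg_mono)

lemma ascent_inj:
  "ascent Xs = ascent Ys \<Longrightarrow> (\<And>X. X \<in> set Xs \<Longrightarrow> dyck X) \<Longrightarrow> (\<And>Y. Y \<in> set Ys \<Longrightarrow> dyck Y) \<Longrightarrow>
    Xs = Ys"
proof (induction Xs arbitrary: Ys)
  case Nil then show ?case by (cases Ys) auto
next
  case (Cons X Xs)
  then obtain Y Ys' where Ys: "Ys = Y # Ys'" by (cases Ys) auto
  have "stays_nonneg 0 (ascent Xs)" "stays_nonneg 0 (ascent Ys')"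
    using Cons.prems(2,3) Ys stays_nonneg_ascent by auto
  then have "X = Y"
    using Cons.prems Ys no_dyck_prefix_rise
    by (intro dyck_prefix_unique[of X "U # ascent Xs" Y "U # ascent Ys'"]) auto
  with Cons Ys show ?case by simp
qed

lemma append_replicate_D_cancel:
  assumes "xs @ replicate s D = ys @ replicate t D"
    and "xs = [] \<or> last xs = U" "ys = [] \<or> last ys = U"
  shows "xs = ys \<and> s = t"
proof -
  have "us = []" if "us @ replicate s' D = replicate t' D" "zs @ us = [] \<or> last (zs @ us) = U" for us zs s' t'
  proof (rule ccontr)
    assume "us \<noteq> []"
    moreover have "set us \<subseteq> {D}" using arg_cong[OF that(1), of set] by (auto split: if_splits)
    ultimately show False using that(2) last_in_set[of us] by auto
  qed
  moreover obtain us where us: "xs = ys @ us \<and> us @ replicate s D = replicate t D \<or>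
      xs @ us = ys \<and> replicate s D = us @ replicate t D"
    using assms(1) by (auto simp: append_eq_append_conv2)
  ultimately have "us = []" using assms(2,3) by metis
  with us assms(1) show ?thesis by auto
qed

lemma staircase_inj:
  assumes "staircase Xs = staircase Ys" "\<And>X. X \<in> set Xs \<Longrightarrow> dyck X" "\<And>Y. Y \<in> set Ys \<Longrightarrow> dyck Y"
  shows "Xs = Ys"
  using append_replicate_D_cancel[OF assms(1)[unfolded staircase_def] ascent_Nil_or_last ascent_Nil_or_last]
    ascent_inj assms(2,3) by metis

lemma phi_U_D:
  assumes "dyck A"
  shows "phi (U # A @ D # B) = U # staircase (map phi (arch_interiors A)) @ D # phi B"
proof -
  have rise_first: "concat (map (\<lambda>X. U # X) Xs) @ [U] = U # ascent Xs" for Xs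
    by (induction Xs) auto
  have "concat (map (\<lambda>p. U # phi (butlast (tl p))) (bprims A)) =
      concat (map (\<lambda>X. U # X) (map phi (arch_interiors A)))"
    by (simp add: arch_interiors_def comp_def)
  then show ?thesis
    using rise_first[of "map phi (arch_interiors A)"] splitaux_dyck[OF assms, of B]
    by (simp add: staircase_def arch_interiors_def replicate_append_same[symmetric])
qed

declare phi.simps(2) [simp del]

lemma length_staircase: "length (staircase Xs) = sum_list (map length Xs) + 2 * length Xs"
  by (induction Xs) (auto simp: staircase_def)

lemma stays_nonneg_replicate_D: "stays_nonneg (int s) (replicate s D)"
  by (induction s) auto

lemma dyck_staircase: "(\<And>X. X \<in> set Xs \<Longrightarrow> dyck X) \<Longrightarrow> dyck (staircase Xs)"
  using stays_nonneg_ascent[of Xs] stays_nonneg_mono[OF stays_nonneg_replicate_D]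
  by (auto simp: staircase_def dyck_iff_stays_nonneg)

lemma peak_count_U_staircase_D:
  assumes "\<And>X. X \<in> set Xs \<Longrightarrow> dyck X"
  shows "peak_count (U # staircase Xs @ D # Y) = sum_list (map peak_count Xs) + 1 + peak_count Y"
proof -
  have "peak_count (U # ascent Xs @ D # Z) =
      sum_list (map peak_count Xs) + 1 + peak_count (D # Z)" for Z
    using assms
  proof (induction Xs)
    case (Cons X Xs)
    show ?case
    proof (cases "X = []")
      case False
      with Cons.prems[of X] have "hd X = U" "last X = D"
        using dyck_hd dyck_last by auto
      then have "peak_count (U # X @ U # R) = peak_count (X @ U # R)" for R
        using False by (cases X) auto
      also have "peak_count (X @ U # R) = peak_count X + peak_count (U # R)" for R
        using peak_count_append[of X "U # R"] \<open>last X = D\<close> by simp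
      finally show ?thesis using Cons by simp
    qed (use Cons in simp)
  qed simp
  moreover have "U # staircase Xs @ D # Y =
      U # ascent Xs @ D # (replicate (length Xs) D @ Y)"
    by (simp add: staircase_def replicate_app_Cons_same)
  moreover have "peak_count (D # replicate s D @ Y) = peak_count Y" for s
    using peak_count_append[of "D # replicate s D" Y] by simp
  ultimately show ?thesis by presburger
qed

lemma length_arch_interiors:
  assumes "dyck A"
  shows "length A = sum_list (map length (arch_interiors A)) + 2 * length (arch_interiors A)"
proof -
  have "length (concat (map (\<lambda>I. U # I @ [D]) Is)) = sum_list (map length Is) + 2 * length Is" for Is
    by (induction Is) auto
  then show ?thesis using concat_arch_interiors[OF assms] by metis
qed

lemma length_phi: "dyck W \<Longrightarrow> length (phi W) = length W"
proof (induction W rule: dyck_induct)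
  case (U_D A B)
  then have "(\<Sum>I\<leftarrow>arch_interiors A. length (phi I)) = (\<Sum>I\<leftarrow>arch_interiors A. length I)"
    by (intro arg_cong[of _ _ sum_list] map_cong) auto
  with U_D show ?case
    by (simp add: phi_U_D length_staircase length_arch_interiors comp_def)
qed simp

lemma dyck_phi: "dyck W \<Longrightarrow> dyck (phi W)"
  by (induction W rule: dyck_induct) (auto simp: phi_U_D intro!: dyck_U_D dyck_staircase)

lemma phi_eq_Nil_iff: "dyck W \<Longrightarrow> phi W = [] \<longleftrightarrow> W = []"
  using length_phi by fastforce

lemma hd_phi: "dyck W \<Longrightarrow> W \<noteq> [] \<Longrightarrow> hd (phi W) = U"
  using dyck_hd dyck_phi phi_eq_Nil_iff by blast

lemma last_phi: "dyck W \<Longrightarrow> W \<noteq> [] \<Longrightarrow> last (phi W) = D"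
  using dyck_last dyck_phi phi_eq_Nil_iff by blast

lemma odd_ups_from_arches:
  assumes "dyck A"
  shows "odd_ups_from 1 A = sum_list (map (odd_ups_from 0) (arch_interiors A))"
proof -
  have "odd_ups_from 1 (concat (map (\<lambda>I. U # I @ [D]) Is)) = sum_list (map (odd_ups_from 0) Is)"
    if "\<And>I. I \<in> set Is \<Longrightarrow> dyck I" for Is
    using that
  proof (induction Is)
    case (Cons I Is)
    have "odd_ups_from 2 I = odd_ups_from 0 I" by (rule odd_ups_from_parity) simp
    with Cons show ?case by (simp add: odd_ups_from_append dyck_iff_stays_nonneg)
  qed simp
  then show ?thesis using concat_arch_interiors[OF assms] dyck_arch_interiors[OF assms] by metis
qed

lemma peak_count_phi: "dyck W \<Longrightarrow> peak_count (phi W) = odd_ups_from 0 W"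
proof (induction W rule: dyck_induct)
  case (U_D A B)
  have "(\<Sum>I\<leftarrow>arch_interiors A. peak_count (phi I)) = (\<Sum>I\<leftarrow>arch_interiors A. odd_ups_from 0 I)"
    using U_D(3) by (intro arg_cong[of _ _ sum_list] map_cong) auto
  moreover have "odd_ups_from 1 A = (\<Sum>I\<leftarrow>arch_interiors A. odd_ups_from 0 I)"
    using odd_ups_from_arches[OF U_D(1)] by simp
  moreover have "odd_ups_from 0 (U # A @ D # B) = 1 + odd_ups_from 1 A + odd_ups_from 0 B"
    using U_D(1) by (simp add: odd_ups_from_append dyck_iff_stays_nonneg)
  moreover have "peak_count (phi (U # A @ D # B)) =
      sum_list (map peak_count (map phi (arch_interiors A))) + 1 + peak_count (phi B)"
    unfolding phi_U_D[OF U_D(1)]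
    by (rule peak_count_U_staircase_D) (use U_D(1) dyck_phi dyck_arch_interiors in auto)
  ultimately show ?case using U_D(4) by (simp add: comp_def)
qed simp

lemma phi_inj: "dyck W \<Longrightarrow> dyck W' \<Longrightarrow> phi W = phi W' \<Longrightarrow> W = W'"
proof (induction W arbitrary: W' rule: dyck_induct)
  case Nil
  then show ?case using phi_eq_Nil_iff by (metis phi.simps(1))
next
  case (U_D A B)
  then have "W' \<noteq> []" by (auto simp: phi_U_D)
  with U_D.prems(1) obtain A' B' where W': "W' = U # A' @ D # B'" "dyck A'" "dyck B'"
    by (cases rule: dyck_cases) auto
  let ?Xs = "map phi (arch_interiors A)" and ?Xs' = "map phi (arch_interiors A')"
  have dyck_Xs: "\<And>X. X \<in> set ?Xs \<Longrightarrow> dyck X" "\<And>X. X \<in> set ?Xs' \<Longrightarrow> dyck X"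
    using dyck_phi dyck_arch_interiors U_D(1) W'(2) by auto
  have "dyck (staircase ?Xs)" "dyck (staircase ?Xs')"
    using dyck_staircase dyck_Xs by blast+
  moreover have "staircase ?Xs @ D # phi B = staircase ?Xs' @ D # phi B'"
    using U_D.prems(2) W' U_D(1) by (simp add: phi_U_D)
  ultimately have "staircase ?Xs = staircase ?Xs'" "phi B = phi B'"
    using dyck_append_D_inject by blast+
  then have "?Xs = ?Xs'" "B = B'"
    using staircase_inj[of ?Xs ?Xs'] dyck_Xs U_D(4) W'(3) by auto
  have "arch_interiors A = arch_interiors A'"
  proof (rule nth_equalityI)
    show "length (arch_interiors A) = length (arch_interiors A')"
      using \<open>?Xs = ?Xs'\<close> map_eq_imp_length_eq by blast
    fix i assume "i < length (arch_interiors A)"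
    with \<open>?Xs = ?Xs'\<close> show "arch_interiors A ! i = arch_interiors A' ! i"
      using U_D(3) W'(2) dyck_arch_interiors by (metis length_map nth_map nth_mem)
  qed
  then have "A = A'" using concat_arch_interiors U_D(1) W'(2) by metis
  with \<open>B = B'\<close> W' show ?case by simp
qed

section \<open>Signed blocks\<close>

lemma beta_U_D: "dyck A \<Longrightarrow> beta (U # A @ D # C) = U # C @ D # A"
  using splitaux_dyck[of A C] by (simp add: beta_def)

definition block :: "step list \<Rightarrow> bool" where
  "block b \<longleftrightarrow> b \<noteq> [] \<and> (if hd b = U then dyck b else neg_dyck b)"

lemma block_cases [consumes 1, case_names pos neg]:
  assumes "block b"
  obtains "hd b = U" "dyck b" "b \<noteq> []" "phi_block b = phi b"
  | A C where "hd b = D" "dyck A" "dyck C" "b = alpha (U # A @ D # C)"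
      "phi_block b = alpha (phi (U # C @ D # A))"
proof (cases "hd b")
  case U
  with assms that(1) show ?thesis by (simp add: block_def phi_block_def)
next
  case D
  with assms have "dyck (alpha b)" "alpha b \<noteq> []"
    by (auto simp: block_def neg_dyck_iff_dyck_alpha)
  then obtain A C where "alpha b = U # A @ D # C" "dyck A" "dyck C"
    using dyck_hd[of "alpha b"] by (cases "alpha b") (auto elim: dyck_first_return)
  with D that(2)[of A C] show ?thesis
    by (auto simp: phi_block_def beta_U_D dest: arg_cong[of _ _ alpha])
qed

lemma block_ht: "block b \<Longrightarrow> ht b = 0"
  by (auto simp: block_def dyck_def neg_dyck_def split: if_splits)

lemma block_Nil [simp]: "\<not> block []"
  by (simp add: block_def)

lemma block_append: "block p \<Longrightarrow> block q \<Longrightarrow> hd p = hd q \<Longrightarrow> block (p @ q)"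
  by (auto simp: block_def dyck_append neg_dyck_iff_dyck_alpha split: if_splits)

lemma neg_block_phi_facts:
  assumes "dyck A" "dyck C"
  defines "Y \<equiv> U # C @ D # A"
  shows "dyck Y" "dyck (phi Y)" "phi Y \<noteq> []" "hd (phi Y) = U" "last (phi Y) = D"
  using assms dyck_U_D dyck_phi hd_phi last_phi phi_eq_Nil_iff by auto

lemma block_phi_block:
  assumes "block b"
  shows "block (phi_block b)"
  using assms
proof (cases rule: block_cases)
  case pos
  then show ?thesis using dyck_phi hd_phi phi_eq_Nil_iff by (auto simp: block_def)
next
  case (neg A C)
  then show ?thesis
    using neg_block_phi_facts[of A C]
    by (auto simp: block_def neg_dyck_iff_dyck_alpha hd_alpha)
qed

lemma phi_block_not_Nil: "block b \<Longrightarrow> phi_block b \<noteq> []"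
  using block_phi_block by (auto simp: block_def)

lemma hd_phi_block:
  assumes "block b"
  shows "hd (phi_block b) = hd b"
  using assms
proof (cases rule: block_cases)
  case pos
  then show ?thesis using hd_phi by simp
next
  case (neg A C)
  then show ?thesis using neg_block_phi_facts[of A C] by (simp add: hd_alpha)
qed

lemma last_phi_block:
  assumes "block b"
  shows "last (phi_block b) = flip (hd b)"
  using assms
proof (cases rule: block_cases)
  case pos
  then show ?thesis using last_phi by simp
next
  case (neg A C)
  then show ?thesis using neg_block_phi_facts[of A C] by (simp add: last_alpha)
qed

lemma length_phi_block:
  assumes "block b"
  shows "length (phi_block b) = length b"
  using assms
proof (cases rule: block_cases)
  case pos
  then show ?thesis using length_phi by simp
next
  case (neg A C)
  then show ?thesis using neg_block_phi_facts[of A C] length_phi by simp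
qed

lemma peak_count_phi_block:
  assumes "block b"
  shows "peak_count (phi_block b) = odd_ups_from 0 b"
  using assms
proof (cases rule: block_cases)
  case pos
  then show ?thesis using peak_count_phi by simp
next
  case (neg A C)
  define Y where "Y = U # C @ D # A"
  note Y = neg_block_phi_facts[OF neg(2,3), folded Y_def]
  have "peak_count (alpha (phi Y)) + 1 = peak_count (phi Y)"
    using peak_count_alpha[OF Y(3)] Y(4,5) by simp
  also have "\<dots> = 1 + odd_ups_from 1 C + odd_ups_from 0 A"
    using Y(1) neg(2,3) peak_count_phi
    by (simp add: Y_def odd_ups_from_append dyck_iff_stays_nonneg)
  finally have "peak_count (phi_block b) = odd_ups_from 1 C + odd_ups_from 0 A"
    using neg(5) Y_def by simp
  moreover have "odd_ups_from 0 b = odd_downs_from 0 (U # A @ D # C)"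
    using odd_ups_from_alpha[of 0 "U # A @ D # C"] neg(4) by simp
  moreover have "\<dots> = odd_downs_from 1 A + odd_downs_from 0 C"
    using neg(2) by (simp add: odd_downs_from_append dyck_iff_stays_nonneg)
  moreover have "odd_downs_from 1 A = odd_ups_from 0 A"
    using odd_ups_from_eq_odd_downs_from[of A 1] odd_ups_from_parity[of 2 0 A] neg(2)
    by (simp add: dyck_iff_stays_nonneg)
  moreover have "odd_downs_from 0 C = odd_ups_from 1 C"
    using odd_ups_from_eq_odd_downs_from[of C 0] neg(3) by (simp add: dyck_iff_stays_nonneg)
  ultimately show ?thesis by simp
qed

lemma phi_block_inj: "inj_on phi_block {b. block b}"
proof (rule inj_onI, simp)
  fix b b' assume b: "block b" and b': "block b'" and eq: "phi_block b = phi_block b'"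
  then have "hd b = hd b'" using hd_phi_block by metis
  from b show "b = b'"
  proof (cases rule: block_cases)
    case pos
    with b' \<open>hd b = hd b'\<close> eq show ?thesis
      by (cases rule: block_cases) (auto intro: phi_inj)
  next
    case (neg A C)
    note b_neg = this
    from b' show ?thesis
    proof (cases rule: block_cases)
      case (neg A' C')
      have "phi (U # C @ D # A) = phi (U # C' @ D # A')"
        using eq b_neg(5) neg(5) by simp
      then have "U # C @ D # A = U # C' @ D # A'"
        using phi_inj dyck_U_D b_neg(2,3) neg(2,3) by blast
      then have "C = C' \<and> A = A'"
        using dyck_append_D_inject b_neg(3) neg(3) by simp
      with b_neg(4) neg(4) show ?thesis by simp
    qed (use b_neg \<open>hd b = hd b'\<close> in simp)
  qed
qed

section \<open>The map \<open>\<phi>'\<close> on bilateral words\<close>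

abbreviation alternating :: "step list list \<Rightarrow> bool" where
  "alternating \<equiv> successively (\<lambda>p q. hd p \<noteq> hd q)"

lemma concat_runs: "concat (runs ps) = concat ps"
  by (induction ps rule: runs.induct) auto

lemma hd_runs: "ps \<noteq> [] \<Longrightarrow> \<exists>r. runs ps \<noteq> [] \<and> hd (runs ps) = hd ps @ r"
proof (induction ps rule: runs.induct)
  case (3 p q ps)
  then show ?case by (cases "hd p = hd q") auto
qed auto

lemma runs_blocks:
  "(\<forall>b\<in>set ps. block b) \<Longrightarrow> (\<forall>b\<in>set (runs ps). block b) \<and> alternating (runs ps)"
proof (induction ps rule: runs.induct)
  case (3 p q ps)
  show ?case
  proof (cases "hd p = hd q")
    case True
    with 3 show ?thesis by (auto intro: block_append)
  next
    case False
    have "q \<noteq> []" using "3.prems" by auto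
    with hd_runs[of "q # ps"] have "hd (hd (runs (q # ps))) = hd q" by auto
    moreover have "(\<forall>b\<in>set (runs (q # ps)). block b) \<and> alternating (runs (q # ps))"
      using "3.IH"(2)[OF False] "3.prems" by simp
    ultimately show ?thesis
      using False "3.prems" by (auto simp: successively_Cons)
  qed
qed auto

lemma block_bprims: "ht w = 0 \<Longrightarrow> p \<in> set (bprims w) \<Longrightarrow> block p"
  using bprims_factors[of w] dyck_U_D[of _ "[]"]
  by (fastforce simp: block_def neg_dyck_iff_dyck_alpha)

lemma bilateral_blocks:
  assumes "bilateral w"
  obtains R where "w = concat R" "\<forall>b\<in>set R. block b" "alternating R"
    "phi' w = concat (map phi_block R)"
proof
  let ?R = "runs (bprims w)"
  have "ht w = 0" using assms by (simp add: bilateral_def)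
  then show "w = concat ?R" "\<forall>b\<in>set ?R. block b" "alternating ?R"
    using concat_runs concat_bprims block_bprims runs_blocks by metis+
qed (simp add: phi'_def)

lemma peak_count_concat:
  assumes "\<And>c. c \<in> set cs \<Longrightarrow> c \<noteq> [] \<and> last c = flip (hd c)" "alternating cs"
  shows "peak_count (concat cs) = sum_list (map peak_count cs)"
  using assms
proof (induction cs)
  case (Cons c cs)
  have "\<not> (last c = U \<and> hd (concat cs) = D)" if "cs \<noteq> []"
    using Cons.prems that by (cases cs; cases "hd c"; cases "hd (hd cs)") auto
  with Cons show ?case by (auto simp: peak_count_append successively_Cons)
qed simp

lemma odd_ups_from_concat:
  "(\<And>c. c \<in> set cs \<Longrightarrow> ht c = 0) \<Longrightarrow> odd_ups_from 0 (concat cs) = sum_list (map (odd_ups_from 0) cs)"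
  by (induction cs) (auto simp: odd_ups_from_append)

lemma ht_concat_closed: "(\<And>c. c \<in> set cs \<Longrightarrow> ht c = 0) \<Longrightarrow> ht (concat cs) = 0"
  by (induction cs) auto

lemma bilateral_phi': "bilateral w \<Longrightarrow> bilateral (phi' w)"
  by (erule bilateral_blocks) (auto simp: bilateral_def block_ht block_phi_block intro!: ht_concat_closed)

lemma length_phi': "bilateral w \<Longrightarrow> length (phi' w) = length w"
  by (erule bilateral_blocks) (simp add: length_concat length_phi_block comp_def cong: map_cong)

lemma peaks_phi': "bilateral w \<Longrightarrow> peaks (phi' w) = odd_ups w"
proof (erule bilateral_blocks)
  fix R assume R: "w = concat R" "\<forall>b\<in>set R. block b" "alternating R"
    and phi'_w: "phi' w = concat (map phi_block R)"
  have "peak_count (concat (map phi_block R)) = sum_list (map peak_count (map phi_block R))"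
    using R(2,3) block_phi_block last_phi_block hd_phi_block
    by (intro peak_count_concat) (auto simp: successively_map block_def cong: successively_cong)
  also have "\<dots> = sum_list (map (odd_ups_from 0) R)"
    using R(2) peak_count_phi_block by (simp add: comp_def cong: map_cong)
  also have "\<dots> = odd_ups_from 0 w"
    using R(1,2) block_ht odd_ups_from_concat by metis
  finally show ?thesis by (simp add: phi'_w peaks_eq odd_ups_eq)
qed

lemma block_prefix_unique:
  assumes "X @ Y = X' @ Y'" "block X" "block X'" "hd X = hd X'"
    and "Y = [] \<or> hd Y = flip (hd X)" "Y' = [] \<or> hd Y' = flip (hd X)"
  shows "X = X'"
proof (cases "hd X")
  case U
  with assms show ?thesis
    by (intro dyck_prefix_unique[of X Y X' Y']) (auto simp: block_def intro: no_dyck_prefix_D)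
next
  case D
  with assms have "dyck (alpha X)" "dyck (alpha X')"
    by (auto simp: block_def neg_dyck_iff_dyck_alpha)
  moreover have "alpha Y = [] \<or> hd (alpha Y) = D"
    using assms(5) D by (cases Y) auto
  moreover have "alpha Y' = [] \<or> hd (alpha Y') = D"
    using assms(6) D by (cases Y') auto
  ultimately have "alpha X = alpha X'"
    using arg_cong[OF assms(1), of alpha]
    by (intro dyck_prefix_unique[of "alpha X" "alpha Y" "alpha X'" "alpha Y'"]) (auto intro: no_dyck_prefix_D)
  then show ?thesis by simp
qed

lemma hd_concat_phi_blocks:
  assumes "\<forall>c\<in>set (b # R). block c" "alternating (b # R)"
  shows "concat (map phi_block R) = [] \<or> hd (concat (map phi_block R)) = flip (hd b)"
proof (cases R)
  case (Cons c R')
  with assms have "phi_block c \<noteq> []" "hd (phi_block c) = hd c" "hd b \<noteq> hd c"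
    using phi_block_not_Nil hd_phi_block by auto
  with Cons show ?thesis by (simp add: flip_eq_iff_neq[symmetric])
qed simp

lemma concat_phi_blocks_inj:
  assumes "concat (map phi_block R) = concat (map phi_block R')"
    and "\<forall>b\<in>set R. block b" "\<forall>b\<in>set R'. block b" "alternating R" "alternating R'"
  shows "R = R'"
  using assms
proof (induction R arbitrary: R')
  case Nil
  then show ?case using phi_block_not_Nil by (cases R') auto
next
  case (Cons b R)
  then obtain b' Q where R': "R' = b' # Q"
    using phi_block_not_Nil by (cases R') auto
  have b: "block b" "block b'" using Cons.prems(2,3) R' by auto
  have eq: "phi_block b @ concat (map phi_block R) = phi_block b' @ concat (map phi_block Q)"
    using Cons.prems(1) R' by simp
  then have "hd (phi_block b) = hd (phi_block b')"
    using phi_block_not_Nil b by (metis hd_append2)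
  then have hd_eq: "hd b = hd b'" using hd_phi_block b by metis
  have "phi_block b = phi_block b'"
  proof (rule block_prefix_unique[OF eq])
    show "block (phi_block b)" "block (phi_block b')" using b block_phi_block by auto
    show "hd (phi_block b) = hd (phi_block b')" by fact
    show "concat (map phi_block R) = [] \<or> hd (concat (map phi_block R)) = flip (hd (phi_block b))"
      using hd_concat_phi_blocks[of b R] Cons.prems(2,4) hd_phi_block b by simp
    show "concat (map phi_block Q) = [] \<or> hd (concat (map phi_block Q)) = flip (hd (phi_block b))"
      using hd_concat_phi_blocks[of b' Q] Cons.prems(3,5) R' hd_phi_block b hd_eq by simp
  qed
  then have "b = b'" using b phi_block_inj by (auto dest: inj_onD)
  moreover have "alternating R" "alternating Q"
    using Cons.prems(4,5) R' by (auto simp: successively_Cons)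
  then have "R = Q"
    using Cons.IH[of Q] Cons.prems(2,3) eq R' \<open>phi_block b = phi_block b'\<close> by simp
  ultimately show ?case using R' by simp
qed

lemma phi'_inj: "inj_on phi' {w. bilateral w}"
proof (rule inj_onI, simp)
  fix w w' assume "bilateral w" "bilateral w'" "phi' w = phi' w'"
  then show "w = w'"
    by (elim bilateral_blocks) (metis concat_phi_blocks_inj)
qed

lemma bij_betw_level_sets:
  assumes "finite S" "f ` S \<subseteq> S" "inj_on f S" "\<And>x. x \<in> S \<Longrightarrow> g (f x) = h x"
  shows "bij_betw f {x \<in> S. h x = k} {x \<in> S. g x = k}"
proof -
  have "f ` S = S" using endo_inj_surj[OF assms(1-3)] .
  then have "f ` {x \<in> S. h x = k} = {x \<in> S. g x = k}"
    using assms(4) by (auto simp: image_iff) (metis imageE)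
  then show ?thesis
    using inj_on_subset[OF assms(3)] by (auto simp: bij_betw_def)
qed

lemma finite_words_length: "finite {w :: step list. length w = n}"
proof -
  have "(UNIV :: step set) = {U, D}" using step.exhaust by auto
  then have "finite (UNIV :: step set)" by (metis finite.emptyI finite_insert)
  then show ?thesis using finite_lists_length_eq[of "UNIV :: step set" n] by simp
qed

theorem theorem2:
  fixes n k :: nat
  shows "bij_betw phi'
           {w. bilateral w \<and> length w = 2 * n \<and> odd_ups w = k}
           {w. bilateral w \<and> length w = 2 * n \<and> peaks w = k}"
proof -
  let ?S = "{w. bilateral w \<and> length w = 2 * n}"
  have "bij_betw phi' {w \<in> ?S. odd_ups w = k} {w \<in> ?S. peaks w = k}"
  proof (rule bij_betw_level_sets)
    show "finite ?S" using finite_words_length[of "2 * n"] by (simp add: finite_subset)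
    show "phi' ` ?S \<subseteq> ?S" using bilateral_phi' length_phi' by auto
    show "inj_on phi' ?S" using phi'_inj by (rule inj_on_subset) auto
    show "peaks (phi' w) = odd_ups w" if "w \<in> ?S" for w using that peaks_phi' by simp
  qed
  then show ?thesis by (simp add: conj_assoc)
qed

end
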